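(* Let $q\ge2$ and let $T$ be a connected, complete and deterministic transducer with input alphabet $\{0,\dots,q-1\}$, real output labels, an initial state, and a real final output at every state. For a nonnegative integer $n$, let $g(n)$ be the output sum of $T$ on input the $q$-ary expansion of $n$. Let $r$ be a nonnegative integer and suppose: (1) from every state, reading the input $0^r$ ($r$ zeros) leads to the initial state; (2) for every state $s$, the sum of the output labels along the path reading $0^r$ starting at $s$ equals the final output of $s$; (3) appending additional zeros at the end of the input sequence (i.e. after the most significant digit) does not change the output sum. Then $g$ is $q$-quasiadditive with parameter $r$, i.e. $g(q^{k+r}a+b)=g(a)+g(b)$ for all nonnegative integers $a,b,k$ with $0\le b<q^k$.
   Context: A transducer consists of a finite set of states, an initial state, the input alphabet $\{0,\dots,q-1\}$, an output alphabet which is a set of real numbers, transitions between states labelled $\varepsilon\mid\delta$ with $\varepsilon$ an input letter and $\delta$ an output letter, and a final output (a real number) for each state. It is complete and deterministic if for every state $s$ and input letter $\varepsilon$ there is exactly one transition leaving $s$ with input label $\varepsilon$. The transducer reads an input word (for an integer $n$: its $q$-ary expansion, starting from the least significant digit) along the unique path starting at the initial state with these input labels; the output sum is the sum of the output labels along this path plus the final output of the state where the path ends. Connected refers to the underlying graph of states and transitions. *)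

theory Defs
  imports Complex_Main
begin

text \<open>q-ary expansion of n, least significant digit first; the expansion of 0 is the
empty word. (Only meaningful for q >= 2; for q < 2 it is empty.)\<close>
function qdigits :: "nat \<Rightarrow> nat \<Rightarrow> nat list" where
  "qdigits q n = (if n = 0 \<or> q < 2 then [] else n mod q # qdigits q (n div q))"
  by auto
termination
  by (relation "measure snd") auto

text \<open>A complete deterministic transducer with state set S is given by a transition
function delta (next state) and an output function out (output label of the transition
leaving state s with input letter e), plus final outputs fin.\<close>

fun trun :: "('s \<Rightarrow> nat \<Rightarrow> 's) \<Rightarrow> 's \<Rightarrow> nat list \<Rightarrow> 's" where
  "trun delta s [] = s"
| "trun delta s (e # w) = trun delta (delta s e) w"

fun tpath_out :: "('s \<Rightarrow> nat \<Rightarrow> 's) \<Rightarrow> ('s \<Rightarrow> nat \<Rightarrow> real) \<Rightarrow> 's \<Rightarrow> nat list \<Rightarrow> real" where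
  "tpath_out delta out s [] = 0"
| "tpath_out delta out s (e # w) = out s e + tpath_out delta out (delta s e) w"

definition toutput_sum ::
  "('s \<Rightarrow> nat \<Rightarrow> 's) \<Rightarrow> ('s \<Rightarrow> nat \<Rightarrow> real) \<Rightarrow> ('s \<Rightarrow> real) \<Rightarrow> 's \<Rightarrow> nat list \<Rightarrow> real" where
  "toutput_sum delta out fin s w = tpath_out delta out s w + fin (trun delta s w)"

definition tconnected :: "nat \<Rightarrow> 's set \<Rightarrow> ('s \<Rightarrow> nat \<Rightarrow> 's) \<Rightarrow> bool" where
  "tconnected q S delta \<longleftrightarrow>
     (let E = {(s, delta s e) | s e. s \<in> S \<and> e < q} in
      \<forall>s\<in>S. \<forall>t\<in>S. (s, t) \<in> (E \<union> E\<inverse>)\<^sup>*)"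

definition q_quasiadditive :: "nat \<Rightarrow> nat \<Rightarrow> (nat \<Rightarrow> real) \<Rightarrow> bool" where
  "q_quasiadditive q r g \<longleftrightarrow>
     (\<forall>a b k. b < q ^ k \<longrightarrow> g (q ^ (k + r) * a + b) = g a + g b)"

end

theory Submission
  imports Defs
begin

text \<open>
  Write \<open>b\<close> with exactly \<open>k\<close> digits (padding with zeros). For \<open>a > 0\<close> the expansion of
  \<open>q\<^sup>k\<^sup>+\<^sup>r a + b\<close> is the padded expansion of \<open>b\<close>, then \<open>0\<^sup>r\<close>, then the expansion of \<open>a\<close>.
  Whatever state the transducer is in after the first block, reading \<open>0\<^sup>r\<close> returns it to
  the initial state while emitting exactly the final output of that state, so the output
  splits into the output sum of the padded expansion of \<open>b\<close> plus that of \<open>a\<close>. Padding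
  zeros do not change the output sum, and \<open>g(0) = 0\<close>: the input \<open>0\<^sup>r\<close> has output sum
  twice the final output of the initial state, but by invariance under padding it also has
  output sum \<open>g(0)\<close>, which is that final output.
\<close>

fun qdigits_padded :: "nat \<Rightarrow> nat \<Rightarrow> nat \<Rightarrow> nat list" where
  "qdigits_padded q 0 b = []"
| "qdigits_padded q (Suc k) b = b mod q # qdigits_padded q k (b div q)"

lemma qdigits_padded_0 [simp]: "qdigits_padded q k 0 = replicate k 0"
  by (induction k) auto

lemma set_qdigits_padded: "q \<ge> 2 \<Longrightarrow> set (qdigits_padded q k b) \<subseteq> {..<q}"
  by (induction k arbitrary: b) auto

lemma set_qdigits: "q \<ge> 2 \<Longrightarrow> set (qdigits q n) \<subseteq> {..<q}"
  by (induction q n rule: qdigits.induct) (subst qdigits.simps, auto)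

lemma qdigits_padded_add:
  "qdigits_padded q (k + r) b = qdigits_padded q k b @ qdigits_padded q r (b div q ^ k)"
  by (induction k arbitrary: b) (auto simp: div_mult2_eq mult.commute)

lemma qdigits_padded_eq_qdigits_append_zeros:
  assumes "q \<ge> 2" and "b < q ^ k"
  shows "\<exists>m. qdigits_padded q k b = qdigits q b @ replicate m 0"
  using assms
proof (induction k arbitrary: b)
  case (Suc k)
  show ?case
  proof (cases "b = 0")
    case False
    have "b div q < q ^ k"
      using Suc.prems by (simp add: less_mult_imp_div_less mult.commute)
    with Suc.IH Suc.prems(1) obtain m
      where "qdigits_padded q k (b div q) = qdigits q (b div q) @ replicate m 0" by blast
    with False Suc.prems(1) show ?thesis by (subst qdigits.simps) auto
  qed (simp del: replicate.simps)
qed simp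

lemma qdigits_mult_power_add:
  assumes "q \<ge> 2" and "a > 0" and "b < q ^ k"
  shows "qdigits q (q ^ k * a + b) = qdigits_padded q k b @ qdigits q a"
  using assms
proof (induction k arbitrary: b)
  case (Suc k)
  have "b div q < q ^ k"
    using Suc.prems by (simp add: less_mult_imp_div_less mult.commute)
  then have IH: "qdigits q (q ^ k * a + b div q) = qdigits_padded q k (b div q) @ qdigits q a"
    using Suc by blast
  have "(q ^ Suc k * a + b) mod q = b mod q"
    and "(q ^ Suc k * a + b) div q = q ^ k * a + b div q"
    using Suc.prems by (simp_all add: mult.assoc)
  with IH Suc.prems show ?case by (subst qdigits.simps) auto
qed simp

lemma qdigits_mult_power_add_zeros:
  assumes "q \<ge> 2" and "a > 0" and "b < q ^ k"
  shows "qdigits q (q ^ (k + r) * a + b) = qdigits_padded q k b @ replicate r 0 @ qdigits q a"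
proof -
  have "b < q ^ (k + r)"
    using assms by (metis le_add1 less_le_trans one_le_numeral order_trans power_increasing)
  then show ?thesis
    using assms qdigits_mult_power_add[of q a b "k + r"] by (simp add: qdigits_padded_add)
qed

lemma trun_append: "trun delta s (u @ v) = trun delta (trun delta s u) v"
  by (induction u arbitrary: s) auto

lemma tpath_out_append:
  "tpath_out delta out s (u @ v) = tpath_out delta out s u + tpath_out delta out (trun delta s u) v"
  by (induction u arbitrary: s) auto

lemma trun_closed:
  "\<forall>s\<in>S. \<forall>e<q. delta s e \<in> S \<Longrightarrow> s \<in> S \<Longrightarrow> set w \<subseteq> {..<q} \<Longrightarrow> trun delta s w \<in> S"
  by (induction w arbitrary: s) auto

lemma toutput_sum_append_reset:
  assumes "trun delta (trun delta s0 u) z = s0"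
    and "tpath_out delta out (trun delta s0 u) z = fin (trun delta s0 u)"
  shows "toutput_sum delta out fin s0 (u @ z @ v)
           = toutput_sum delta out fin s0 u + toutput_sum delta out fin s0 v"
  using assms by (simp add: toutput_sum_def tpath_out_append trun_append)

theorem proposition10:
  fixes q r :: nat and S :: "'s set" and s0 :: 's
    and delta :: "'s \<Rightarrow> nat \<Rightarrow> 's" and out :: "'s \<Rightarrow> nat \<Rightarrow> real" and fin :: "'s \<Rightarrow> real"
  assumes q: "q \<ge> 2"
    and finS: "finite S"
    and init: "s0 \<in> S"
    and trans: "\<forall>s\<in>S. \<forall>e<q. delta s e \<in> S"
    and conn: "tconnected q S delta"
    and zeros_init: "\<forall>s\<in>S. trun delta s (replicate r 0) = s0"
    and zeros_out: "\<forall>s\<in>S. tpath_out delta out s (replicate r 0) = fin s"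
    and append_zeros: "\<forall>w m. set w \<subseteq> {..<q} \<longrightarrow>
        toutput_sum delta out fin s0 (w @ replicate m 0) = toutput_sum delta out fin s0 w"
  shows "q_quasiadditive q r (\<lambda>n. toutput_sum delta out fin s0 (qdigits q n))"
  unfolding q_quasiadditive_def
proof (intro allI impI)
  let ?T = "toutput_sum delta out fin s0"
  fix a b k :: nat
  assume b: "b < q ^ k"
  have "?T (replicate r 0) = 2 * fin s0"
    using init zeros_init zeros_out by (simp add: toutput_sum_def)
  moreover have "?T (replicate r 0) = fin s0"
    using append_zeros[rule_format, of "[]" r] by (simp add: toutput_sum_def)
  ultimately have T0: "?T [] = 0" by (simp add: toutput_sum_def)
  obtain m where "qdigits_padded q k b = qdigits q b @ replicate m 0"
    using qdigits_padded_eq_qdigits_append_zeros[OF q b] by blast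
  then have T_padded: "?T (qdigits_padded q k b) = ?T (qdigits q b)"
    using append_zeros set_qdigits[OF q] by simp
  show "?T (qdigits q (q ^ (k + r) * a + b)) = ?T (qdigits q a) + ?T (qdigits q b)"
  proof (cases "a = 0")
    case False
    have "trun delta s0 (qdigits_padded q k b) \<in> S"
      using trun_closed[OF trans init set_qdigits_padded[OF q]] .
    then have "?T (qdigits_padded q k b @ replicate r 0 @ qdigits q a)
        = ?T (qdigits_padded q k b) + ?T (qdigits q a)"
      using zeros_init zeros_out by (intro toutput_sum_append_reset) auto
    with False show ?thesis
      using T_padded qdigits_mult_power_add_zeros[OF q _ b] by simp
  qed (simp add: T0)
qed

end
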